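(* Let $\frac12<s<1$, $M\in\mathbb R\setminus\{0\}$, let $\gamma=\gamma(s)\ge\pi/2$ be the gap constant, and let $c\in(0,\gamma)\cup(\gamma,\infty)$. Let $$\mathcal V=\left\{\sqrt{3\left(\frac{\mu_n^1}{2\rho_n^{1/(2s)}}\right)^2+\rho_n^{1-\frac1s}}:\ n\ge1\right\}.$$ (a) If $c\notin\mathcal V$, then for each $N\ge1$ there is $\upsilon=\upsilon(N,c)>0$ such that $|\lambda_n^j-\lambda_m^k|\ge\upsilon$ for all $(n,j),(m,k)\in S$ with $(n,j)\ne(m,k)$, $1\le|n|,|m|\le N$ and $j,k\in\{2,3\}$. (b) If $c\in\mathcal V$, then there is a unique $n_c\ge1$ such that $\lambda_{-n_c}^2=\lambda_{n_c}^3$, and for each $N\ge1$ there is $\upsilon=\upsilon(N,c)>0$ such that $|\lambda_n^j-\lambda_m^k|\ge\upsilon$ for all $(n,j),(m,k)\in S$ with $(n,j)\neq(m,k)$, $1\le|n|,|m|\le N$, $j,k\in\{2,3\}$, except for the pair $\{(n,j),(m,k)\}=\{(-n_c,2),(n_c,3)\}$.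
   Context: $(-d_x^2)^s$ denotes the fractional Laplacian; $0<\rho_1\le\rho_2\le\cdots\to\infty$ are the eigenvalues (with multiplicity) of its realization on $L^2(-1,1)$ with zero exterior Dirichlet condition. Standing facts used for $\frac12<s<1$: the eigenvalues $\rho_n$ are simple, and there is a constant $\gamma=\gamma(s)\ge\pi/2$ such that $\rho_{n+1}^{1/(2s)}-\rho_n^{1/(2s)}\ge\gamma$ for all $n$ large enough. Fix $M\in\mathbb R\setminus\{0\}$. For $n\ge1$, $\mu_n^1$ is the unique real root of $\mu^3+\rho_n\mu-M\rho_n=0$ (it lies strictly between $0$ and $M$), $\mu_n^2=-\frac{\mu_n^1}{2}+i\sqrt{3(\mu_n^1/2)^2+\rho_n}$ and $\mu_n^3=\overline{\mu_n^2}$. For $c\in\mathbb R$, $\mathbb Z^*=\mathbb Z\setminus\{0\}$, $S=\{(n,j):n\in\mathbb Z^*,\ j\in\{1,2,3\}\}$ and $\lambda_n^j=\mu_{|n|}^j+i\,\mathrm{sgn}(n)\,c\,\rho_{|n|}^{1/(2s)}$ for $(n,j)\in S$. *)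

theory Defs
  imports "HOL-Analysis.Analysis"
begin

text \<open>The eigenvalues rho_1 <= rho_2 <= ... of the Dirichlet fractional Laplacian
  are modelled as an abstract sequence rho :: nat => real (index 0 unused),
  subject to the standing facts stated as hypotheses of the theorem.\<close>

definition mu1 :: "real \<Rightarrow> real \<Rightarrow> real" where
  "mu1 M r = (THE x. x ^ 3 + r * x - M * r = 0)"

definition mu2 :: "real \<Rightarrow> real \<Rightarrow> complex" where
  "mu2 M r = Complex (- mu1 M r / 2) (sqrt (3 * (mu1 M r / 2)^2 + r))"

definition mu3 :: "real \<Rightarrow> real \<Rightarrow> complex" where
  "mu3 M r = cnj (mu2 M r)"

definition mu :: "real \<Rightarrow> real \<Rightarrow> nat \<Rightarrow> complex" where
  "mu M r j = (if j = 1 then complex_of_real (mu1 M r) else if j = 2 then mu2 M r else mu3 M r)"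

definition lam :: "real \<Rightarrow> real \<Rightarrow> real \<Rightarrow> (nat \<Rightarrow> real) \<Rightarrow> int \<Rightarrow> nat \<Rightarrow> complex" where
  "lam s M c rho n j =
     mu M (rho (nat \<bar>n\<bar>)) j
     + \<i> * complex_of_real (of_int (sgn n) * c * rho (nat \<bar>n\<bar>) powr (1 / (2 * s)))"

definition Vset :: "real \<Rightarrow> real \<Rightarrow> (nat \<Rightarrow> real) \<Rightarrow> real set" where
  "Vset s M rho = {sqrt (3 * (mu1 M (rho n) / (2 * rho n powr (1 / (2 * s))))^2
                        + rho n powr (1 - 1 / s)) | n. n \<ge> 1}"

end

theory Submission
  imports Defs
begin

text \<open>For j in {2, 3} the real part of lambda_n^j is -mu_|n|^1 / 2, and mu^1 is an injective function
  of rho, so two such eigenvalues can only coincide when |n| = |m| = p. Their imaginary parts are then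
  +-Im mu^2(rho_p) +- c rho_p^(1/(2s)); these agree only for the pair lambda_{-p}^2 = lambda_p^3, and only
  when c equals the critical speed Im mu^2(rho_p) / rho_p^(1/(2s)), which is the element of V indexed
  by p. Writing mu^1 = M t with M^2 t^3 = rho (1 - t) shows that the critical speed is strictly
  decreasing in rho for 0 < s < 1, so at most one p collides. Finally, for |n|, |m| <= N there are only
  finitely many pairs, so the least distance between non-colliding ones is positive.\<close>

lemma cube_plus_linear_strict_mono:
  fixes x y r :: real
  assumes "x < y" and "0 \<le> r"
  shows "x ^ 3 + r * x < y ^ 3 + r * y"
proof -
  have "0 < x\<^sup>2 + y\<^sup>2" using assms(1) by (cases "x = 0") (simp_all add: add_pos_nonneg)
  then have "0 < (x + y)\<^sup>2 + (x\<^sup>2 + y\<^sup>2)" by (rule add_nonneg_pos[rotated]) simp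
  also have "\<dots> = 2 * (x\<^sup>2 + x * y + y\<^sup>2)" by (simp add: power2_eq_square algebra_simps)
  finally have "0 < (y - x) * (x\<^sup>2 + x * y + y\<^sup>2 + r)"
    using assms by (intro mult_pos_pos) auto
  also have "\<dots> = (y ^ 3 + r * y) - (x ^ 3 + r * x)"
    by (simp add: power2_eq_square power3_eq_cube algebra_simps)
  finally show ?thesis by simp
qed

lemma mu1_root:
  assumes "0 < r"
  shows "mu1 M r ^ 3 + r * mu1 M r - M * r = 0"
proof -
  let ?g = "\<lambda>x::real. x ^ 3 + r * x - M * r"
  have "\<bar>M\<bar> * r \<ge> M * r" "\<bar>M\<bar> * r \<ge> - M * r"
    using assms mult_right_mono[of "- M" "\<bar>M\<bar>" r] by (simp_all add: mult_right_mono)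
  moreover have "0 \<le> \<bar>M\<bar> ^ 3" by simp
  moreover have "?g (- \<bar>M\<bar>) = - (\<bar>M\<bar> ^ 3) - \<bar>M\<bar> * r - M * r" "?g \<bar>M\<bar> = \<bar>M\<bar> ^ 3 + \<bar>M\<bar> * r - M * r"
    by (simp_all add: mult.commute[of r])
  ultimately have "?g (- \<bar>M\<bar>) \<le> 0" "0 \<le> ?g \<bar>M\<bar>" by linarith+
  moreover have "\<forall>x. - \<bar>M\<bar> \<le> x \<and> x \<le> \<bar>M\<bar> \<longrightarrow> isCont ?g x"
    by (intro allI impI continuous_intros)
  ultimately obtain x where x: "?g x = 0"
    using IVT[of ?g "- \<bar>M\<bar>" 0 "\<bar>M\<bar>"] by auto
  have "y = x" if "?g y = 0" for y
    using cube_plus_linear_strict_mono[of x y r] cube_plus_linear_strict_mono[of y x r]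
      x that assms by (cases y x rule: linorder_cases) simp_all
  with x have "\<exists>!x. ?g x = 0" by blast
  then show ?thesis unfolding mu1_def by (rule theI')
qed

lemma mu1_eq_M_times:
  assumes "0 < r" and "M \<noteq> 0"
  obtains t where "0 < t" "t < 1" "M\<^sup>2 * t ^ 3 = r * (1 - t)" "mu1 M r = M * t"
proof -
  define t where "t = mu1 M r / M"
  have mu1_t: "mu1 M r = M * t" using assms(2) unfolding t_def by simp
  have "M * (M\<^sup>2 * t ^ 3 - r * (1 - t)) = 0"
    using mu1_root[OF assms(1), of M] unfolding mu1_t
    by (simp add: algebra_simps power3_eq_cube power2_eq_square)
  then have eq: "M\<^sup>2 * t ^ 3 = r * (1 - t)" using assms(2) by simp
  have M2: "0 < M\<^sup>2" using assms(2) by simp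
  have "0 < t"
  proof (rule ccontr)
    assume "\<not> 0 < t"
    then have "M\<^sup>2 * t ^ 3 \<le> 0" "0 < r * (1 - t)"
      using M2 assms(1) by (simp_all add: mult_nonneg_nonpos power_le_zero_eq)
    with eq show False by linarith
  qed
  moreover have "t < 1"
  proof (rule ccontr)
    assume "\<not> t < 1"
    then have "r * (1 - t) \<le> 0" using assms(1) by (simp add: mult_nonneg_nonpos)
    moreover have "0 < M\<^sup>2 * t ^ 3" using M2 \<open>0 < t\<close> by simp
    ultimately show False using eq by linarith
  qed
  ultimately show ?thesis using that eq mu1_t by blast
qed

lemma mu1_inj_on:
  assumes "M \<noteq> 0"
  shows "inj_on (mu1 M) {0<..}"
proof (rule inj_onI)
  fix r1 r2 :: real
  assume r: "r1 \<in> {0<..}" "r2 \<in> {0<..}" and eq: "mu1 M r1 = mu1 M r2"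
  obtain t where t: "M\<^sup>2 * t ^ 3 = r1 * (1 - t)" "t < 1" "mu1 M r1 = M * t"
    using mu1_eq_M_times[of r1 M] r assms by auto
  obtain u where u: "M\<^sup>2 * u ^ 3 = r2 * (1 - u)" "mu1 M r2 = M * u"
    using mu1_eq_M_times[of r2 M] r assms by auto
  have "u = t" using t(3) u(2) eq assms by simp
  with t u show "r1 = r2" by simp
qed

lemma mu1_ratio_bounds:
  assumes "M \<noteq> 0" and "0 < r1" and "r1 \<le> r2"
  shows "1 \<le> mu1 M r2 / mu1 M r1" and "(mu1 M r2 / mu1 M r1) ^ 3 \<le> r2 / r1"
proof -
  have r2: "0 < r2" using assms by linarith
  obtain t1 where t1: "0 < t1" "t1 < 1" "M\<^sup>2 * t1 ^ 3 = r1 * (1 - t1)" "mu1 M r1 = M * t1"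
    using mu1_eq_M_times[OF assms(2,1)] by blast
  obtain t2 where t2: "0 < t2" "t2 < 1" "M\<^sup>2 * t2 ^ 3 = r2 * (1 - t2)" "mu1 M r2 = M * t2"
    using mu1_eq_M_times[OF r2 assms(1)] by blast
  have ratio: "mu1 M r2 / mu1 M r1 = t2 / t1" using t1(4) t2(4) assms(1) by simp
  have M2: "0 < M\<^sup>2" using assms(1) by simp
  have t12: "t1 \<le> t2"
  proof (rule ccontr)
    assume "\<not> t1 \<le> t2"
    then have "t2 ^ 3 < t1 ^ 3" using t2(1) by (simp add: power_strict_mono)
    then have "r2 * (1 - t2) < r1 * (1 - t1)"
      using M2 unfolding t1(3)[symmetric] t2(3)[symmetric] by simp
    moreover have "r1 * (1 - t1) \<le> r2 * (1 - t2)"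
      using \<open>\<not> t1 \<le> t2\<close> assms(2,3) t1(2) by (intro mult_mono) auto
    ultimately show False by simp
  qed
  then show "1 \<le> mu1 M r2 / mu1 M r1" unfolding ratio using t1(1) by simp
  \<comment> \<open>Both sides equal \<open>M\<^sup>2 t1\<^sup>3 t2\<^sup>3\<close>.\<close>
  have "(1 - t1) * (r1 * t2 ^ 3) = r2 * (1 - t2) * t1 ^ 3"
    using t1(3) t2(3) by (metis mult.assoc mult.commute)
  also have "\<dots> \<le> (1 - t1) * (r2 * t1 ^ 3)"
    using t12 r2 t1(1) by (simp add: mult_right_mono algebra_simps)
  finally have "r1 * t2 ^ 3 \<le> r2 * t1 ^ 3" using t1(2) by simp
  then show "(mu1 M r2 / mu1 M r1) ^ 3 \<le> r2 / r1"
    unfolding ratio using t1(1) assms(2) by (simp add: field_simps)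
qed

lemma abs_mu1_div_powr_antimono:
  assumes "1 / 3 \<le> a" and "M \<noteq> 0" and "0 < r1" and "r1 \<le> r2"
  shows "\<bar>mu1 M r2\<bar> / r2 powr a \<le> \<bar>mu1 M r1\<bar> / r1 powr a"
proof -
  define x where "x = mu1 M r2 / mu1 M r1"
  have x1: "1 \<le> x" and x3: "x ^ 3 \<le> r2 / r1"
    using mu1_ratio_bounds[OF assms(2-4)] unfolding x_def by auto
  have "\<bar>mu1 M r2\<bar> / \<bar>mu1 M r1\<bar> = \<bar>x\<bar>" unfolding x_def by simp
  also have "\<dots> = x powr 1" using x1 by simp
  also have "\<dots> \<le> x powr (3 * a)" using assms(1) x1 by (intro powr_mono) auto
  also have "\<dots> = (x powr 3) powr a" by (simp add: powr_powr)
  also have "\<dots> = (x ^ 3) powr a" using x1 by simp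
  also have "\<dots> \<le> (r2 / r1) powr a" using assms(1) x1 x3 by (intro powr_mono2) auto
  also have "\<dots> = r2 powr a / r1 powr a" by (simp add: powr_divide)
  finally have "\<bar>mu1 M r2\<bar> / \<bar>mu1 M r1\<bar> \<le> r2 powr a / r1 powr a" .
  moreover have "mu1 M r1 \<noteq> 0" using x1 unfolding x_def by auto
  ultimately show ?thesis using assms(3,4) by (simp add: field_simps)
qed

definition critical_speed :: "real \<Rightarrow> real \<Rightarrow> real \<Rightarrow> real" where
  "critical_speed s M r =
     sqrt (3 * (mu1 M r / (2 * r powr (1 / (2 * s))))\<^sup>2 + r powr (1 - 1 / s))"

lemma Vset_eq_image: "Vset s M rho = (\<lambda>n. critical_speed s M (rho n)) ` {1..}"
  unfolding Vset_def critical_speed_def by auto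

lemma Im_mu2: "Im (mu2 M r) = sqrt (3 * (mu1 M r / 2)\<^sup>2 + r)"
  by (simp add: mu2_def)

lemma critical_speed_eq:
  assumes "0 < r"
  shows "critical_speed s M r = Im (mu2 M r) / r powr (1 / (2 * s))"
proof -
  define R where "R = r powr (1 / (2 * s))"
  have R0: "0 < R" using assms unfolding R_def by simp
  have "R\<^sup>2 = r powr (1 / s)"
    unfolding R_def power2_eq_square powr_add[symmetric] by simp
  then have "r powr (1 - 1 / s) = r / R\<^sup>2" using assms by (simp add: powr_diff)
  then have "3 * (mu1 M r / (2 * R))\<^sup>2 + r powr (1 - 1 / s) = (3 * (mu1 M r / 2)\<^sup>2 + r) / R\<^sup>2"
    using R0 by (simp add: field_simps)
  then show ?thesis
    using R0 unfolding critical_speed_def Im_mu2 R_def[symmetric] by (simp add: real_sqrt_divide)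
qed

lemma critical_speed_strict_antimono:
  assumes "0 < s" and "s < 1" and "M \<noteq> 0" and "0 < r1" and "r1 < r2"
  shows "critical_speed s M r2 < critical_speed s M r1"
proof -
  define a where "a = 1 / (2 * s)"
  have "1 / 3 \<le> a" using assms(1,2) unfolding a_def by (simp add: field_simps)
  then have "\<bar>mu1 M r2\<bar> / r2 powr a \<le> \<bar>mu1 M r1\<bar> / r1 powr a"
    using abs_mu1_div_powr_antimono assms(3-5) by simp
  then have "(mu1 M r2 / (2 * r2 powr a))\<^sup>2 \<le> (mu1 M r1 / (2 * r1 powr a))\<^sup>2"
    by (simp add: abs_le_square_iff[symmetric])
  moreover have "r2 powr (1 - 1 / s) < r1 powr (1 - 1 / s)"
    using assms by (intro powr_less_mono2_neg) (auto simp: field_simps)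
  ultimately show ?thesis unfolding critical_speed_def a_def[symmetric] by simp
qed

lemma Im_mu2_eq_iff_critical_speed:
  "0 < r \<Longrightarrow> Im (mu2 M r) = c * r powr (1 / (2 * s)) \<longleftrightarrow> critical_speed s M r = c"
  by (auto simp: critical_speed_eq field_simps)

lemma critical_speed_inj_on:
  assumes "0 < s" and "s < 1" and "M \<noteq> 0"
  shows "inj_on (critical_speed s M) {0<..}"
proof (rule inj_onI)
  fix x y :: real
  assume "x \<in> {0<..}" "y \<in> {0<..}" "critical_speed s M x = critical_speed s M y"
  then show "x = y"
    using critical_speed_strict_antimono[OF assms, of x y] critical_speed_strict_antimono[OF assms, of y x]
    by (cases x y rule: linorder_cases) auto
qed

lemma Re_lam: "j \<in> {2, 3} \<Longrightarrow> Re (lam s M c rho n j) = - mu1 M (rho (nat \<bar>n\<bar>)) / 2"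
  by (auto simp: lam_def mu_def mu2_def mu3_def)

lemma Im_lam:
  "j \<in> {2, 3} \<Longrightarrow> Im (lam s M c rho n j) =
     (if j = 2 then 1 else - 1) * Im (mu2 M (rho (nat \<bar>n\<bar>)))
     + of_int (sgn n) * c * rho (nat \<bar>n\<bar>) powr (1 / (2 * s))"
  by (auto simp: lam_def mu_def mu3_def)

lemma signed_sum_eq_cases:
  fixes W C a b e f :: real
  assumes "0 < W" "0 < C" "a \<in> {- 1, 1}" "b \<in> {- 1, 1}" "e \<in> {- 1, 1}" "f \<in> {- 1, 1}"
    and "a * W + e * C = b * W + f * C" and "(a, e) \<noteq> (b, f)"
  shows "W = C \<and> b = - a \<and> e = - a \<and> f = a"
  using assms by auto

lemma lam_eq_imp_abs_eq:
  assumes "M \<noteq> 0" and "inj_on rho {1..}" and "\<And>p. 1 \<le> p \<Longrightarrow> 0 < rho p"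
    and "n \<noteq> 0" "m \<noteq> 0" "j \<in> {2, 3}" "k \<in> {2, 3}"
    and "lam s M c rho n j = lam s M c rho m k"
  shows "nat \<bar>n\<bar> = nat \<bar>m\<bar>"
proof -
  have n1: "1 \<le> nat \<bar>n\<bar>" and m1: "1 \<le> nat \<bar>m\<bar>" using assms(4,5) by auto
  have "mu1 M (rho (nat \<bar>n\<bar>)) = mu1 M (rho (nat \<bar>m\<bar>))"
    using arg_cong[OF assms(8), of Re] Re_lam assms(6,7) by simp
  then have "rho (nat \<bar>n\<bar>) = rho (nat \<bar>m\<bar>)"
    using inj_onD[OF mu1_inj_on[OF assms(1)]] assms(3) n1 m1 by simp
  then show ?thesis using inj_onD[OF assms(2)] n1 m1 by simp
qed

lemma lam_collision:
  assumes "M \<noteq> 0" and "0 < c" and "inj_on rho {1..}" and "\<And>p. 1 \<le> p \<Longrightarrow> 0 < rho p"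
    and "n \<noteq> 0" "m \<noteq> 0" "j \<in> {2, 3}" "k \<in> {2, 3}" "(n, j) \<noteq> (m, k)"
    and eq: "lam s M c rho n j = lam s M c rho m k"
  obtains p where "1 \<le> p" "critical_speed s M (rho p) = c"
    "{(n, j), (m, k)} = {(- int p, 2), (int p, 3)}"
proof -
  define p where "p = nat \<bar>n\<bar>"
  have p1: "1 \<le> p" using assms(5) unfolding p_def by auto
  have p_m: "p = nat \<bar>m\<bar>"
    unfolding p_def using lam_eq_imp_abs_eq[OF assms(1,3,4) assms(5-8) eq] .
  define W C where "W = Im (mu2 M (rho p))" and "C = c * rho p powr (1 / (2 * s))"
  have W0: "0 < W" using assms(4)[OF p1] unfolding W_def Im_mu2 by (simp add: add_nonneg_pos)
  have C0: "0 < C" using assms(2) assms(4)[OF p1] unfolding C_def by simp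
  define \<sigma> :: "nat \<Rightarrow> real" where "\<sigma> j = (if j = 2 then 1 else - 1)" for j
  have Im_eq: "\<sigma> j * W + of_int (sgn n) * C = \<sigma> k * W + of_int (sgn m) * C"
    using arg_cong[OF eq, of Im] Im_lam[of j] Im_lam[of k] assms(7,8) p_m
    unfolding \<sigma>_def W_def C_def p_def by (simp add: mult.assoc)
  have n_p: "n = sgn n * int p" unfolding p_def by (simp add: mult_sgn_abs)
  have m_p: "m = sgn m * int p" unfolding p_m by (simp add: mult_sgn_abs)
  have "(\<sigma> j, real_of_int (sgn n)) \<noteq> (\<sigma> k, real_of_int (sgn m))"
    using n_p m_p assms(7-9) unfolding \<sigma>_def by (auto split: if_splits)
  moreover have "\<sigma> i \<in> {- 1, 1}" for i unfolding \<sigma>_def by simp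
  moreover have "real_of_int (sgn i) \<in> {- 1, 1}" if "i \<noteq> 0" for i
    using that by (simp add: sgn_if)
  ultimately have "W = C" and \<sigma>_k: "\<sigma> k = - \<sigma> j"
    and sgn_n: "of_int (sgn n) = - \<sigma> j" and sgn_m: "of_int (sgn m) = \<sigma> j"
    using signed_sum_eq_cases[OF W0 C0 _ _ _ _ Im_eq] assms(5,6) by blast+
  have "{(n, j), (m, k)} = {(- int p, 2), (int p, 3)}"
  proof (cases "j = 2")
    case True
    then have "sgn n = - 1" "sgn m = 1" "k = 3"
      using sgn_n sgn_m \<sigma>_k assms(8) unfolding \<sigma>_def by (auto split: if_splits)
    then show ?thesis using n_p m_p True by simp
  next
    case False
    then have "j = 3" "sgn n = 1" "sgn m = - 1" "k = 2"
      using sgn_n sgn_m \<sigma>_k assms(7,8) unfolding \<sigma>_def by (auto split: if_splits)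
    then show ?thesis using n_p m_p by auto
  qed
  then show ?thesis
    using that p1 \<open>W = C\<close> Im_mu2_eq_iff_critical_speed[OF assms(4)[OF p1]] unfolding W_def C_def by blast
qed

lemma lam_collision_iff:
  "1 \<le> p \<Longrightarrow> 0 < rho p \<Longrightarrow> lam s M c rho (- int p) 2 = lam s M c rho (int p) 3
     \<longleftrightarrow> critical_speed s M (rho p) = c"
  by (auto simp: complex_eq_iff Re_lam Im_lam Im_mu2_eq_iff_critical_speed[symmetric])

lemma finite_set_dist_lower_bound:
  assumes "finite I" and "\<And>x y. x \<in> I \<Longrightarrow> y \<in> I \<Longrightarrow> P x y \<Longrightarrow> f x \<noteq> f y"
  shows "\<exists>\<upsilon>>0. \<forall>x\<in>I. \<forall>y\<in>I. P x y \<longrightarrow> \<upsilon> \<le> dist (f x) (f y)"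
proof -
  define D where "D = (\<lambda>(x, y). dist (f x) (f y)) ` {(x, y) \<in> I \<times> I. P x y}"
  have "finite {(x, y) \<in> I \<times> I. P x y}"
    by (rule finite_subset[of _ "I \<times> I"]) (use assms(1) in auto)
  then have "finite D" unfolding D_def by simp
  then have "0 < Min (insert 1 D)" using assms(2) unfolding D_def by (subst Min_gr_iff) auto
  moreover have "\<forall>x\<in>I. \<forall>y\<in>I. P x y \<longrightarrow> Min (insert 1 D) \<le> dist (f x) (f y)"
    using \<open>finite D\<close> unfolding D_def by (auto intro: Min_le)
  ultimately show ?thesis by blast
qed

lemma lam_separation:
  assumes "M \<noteq> 0" and "0 < c" and "inj_on rho {1..}" and "\<And>p. 1 \<le> p \<Longrightarrow> 0 < rho p"
    and excluded: "\<And>p n j m k. 1 \<le> p \<Longrightarrow> critical_speed s M (rho p) = c \<Longrightarrow>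
      {(n, j), (m, k)} = {(- int p, 2), (int p, 3)} \<Longrightarrow> \<not> Q n j m k"
  shows "\<exists>\<upsilon>>0. \<forall>n m :: int. \<forall>j k :: nat.
    (n, j) \<noteq> (m, k) \<and> n \<noteq> 0 \<and> m \<noteq> 0 \<and> \<bar>n\<bar> \<le> int N \<and> \<bar>m\<bar> \<le> int N
    \<and> j \<in> {2, 3} \<and> k \<in> {2, 3} \<and> Q n j m k
    \<longrightarrow> cmod (lam s M c rho n j - lam s M c rho m k) \<ge> \<upsilon>"
proof -
  define I where "I = {- int N..int N} \<times> {2 :: nat, 3}"
  have "\<exists>\<upsilon>>0. \<forall>x\<in>I. \<forall>y\<in>I. x \<noteq> y \<and> fst x \<noteq> 0 \<and> fst y \<noteq> 0 \<and> Q (fst x) (snd x) (fst y) (snd y)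
      \<longrightarrow> \<upsilon> \<le> dist (case_prod (lam s M c rho) x) (case_prod (lam s M c rho) y)"
  proof (rule finite_set_dist_lower_bound, goal_cases)
    case (2 x y)
    obtain n j m k where xy: "x = (n, j)" "y = (m, k)" by fastforce
    show ?case
    proof
      assume "case_prod (lam s M c rho) x = case_prod (lam s M c rho) y"
      then have eq: "lam s M c rho n j = lam s M c rho m k" unfolding xy by simp
      have nm: "n \<noteq> 0" "m \<noteq> 0" "j \<in> {2, 3}" "k \<in> {2, 3}" "(n, j) \<noteq> (m, k)" and "Q n j m k"
        using 2 unfolding xy I_def by auto
      obtain p where "1 \<le> p" "critical_speed s M (rho p) = c"
        "{(n, j), (m, k)} = {(- int p, 2), (int p, 3)}"
        using lam_collision[OF assms(1-4) nm eq] by blast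
      with excluded \<open>Q n j m k\<close> show False by blast
    qed
  qed (simp add: I_def)
  then obtain \<upsilon> where "0 < \<upsilon>" and \<upsilon>: "\<forall>x\<in>I. \<forall>y\<in>I.
      x \<noteq> y \<and> fst x \<noteq> 0 \<and> fst y \<noteq> 0 \<and> Q (fst x) (snd x) (fst y) (snd y)
      \<longrightarrow> \<upsilon> \<le> dist (case_prod (lam s M c rho) x) (case_prod (lam s M c rho) y)"
    by blast
  show ?thesis
  proof (intro exI[of _ \<upsilon>] conjI allI impI)
    fix n m :: int and j k :: nat
    assume h: "(n, j) \<noteq> (m, k) \<and> n \<noteq> 0 \<and> m \<noteq> 0 \<and> \<bar>n\<bar> \<le> int N \<and> \<bar>m\<bar> \<le> int N
      \<and> j \<in> {2, 3} \<and> k \<in> {2, 3} \<and> Q n j m k"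
    then have "(n, j) \<in> I" "(m, k) \<in> I" unfolding I_def by auto
    with \<upsilon> h have "\<upsilon> \<le> dist (case_prod (lam s M c rho) (n, j)) (case_prod (lam s M c rho) (m, k))"
      by (metis fst_conv snd_conv)
    then show "cmod (lam s M c rho n j - lam s M c rho m k) \<ge> \<upsilon>" by (simp add: dist_norm)
  qed (rule \<open>0 < \<upsilon>\<close>)
qed

lemma strict_mono_on_atLeastI:
  fixes f :: "nat \<Rightarrow> 'a :: order"
  assumes "\<And>n. a \<le> n \<Longrightarrow> f n < f (Suc n)"
  shows "strict_mono_on {a..} f"
proof (rule strict_mono_onI)
  fix m n assume "m \<in> {a..}" "n \<in> {a..}" "m < n"
  then show "f m < f n"
    using lift_Suc_mono_less[of "\<lambda>i. f (a + i)" "m - a" "n - a"] assms by auto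
qed

theorem lemma3p8:
  fixes s M \<gamma> c :: real and rho :: "nat \<Rightarrow> real"
  assumes s_gt: "1/2 < s" and s_lt: "s < 1"
    and M_nz: "M \<noteq> 0"
    and rho_pos: "0 < rho 1"
    and rho_simple: "\<And>n. n \<ge> 1 \<Longrightarrow> rho n < rho (Suc n)"
    and rho_inf: "filterlim rho at_top sequentially"
    and gamma_ge: "\<gamma> \<ge> pi / 2"
    and gap: "\<forall>\<^sub>F n in sequentially.
                 rho (Suc n) powr (1 / (2 * s)) - rho n powr (1 / (2 * s)) \<ge> \<gamma>"
    and c_pos: "0 < c" and c_ne: "c \<noteq> \<gamma>"
  shows
    "(c \<notin> Vset s M rho \<longrightarrow>
       (\<forall>N::nat. N \<ge> 1 \<longrightarrow> (\<exists>\<upsilon>>0. \<forall>n m :: int. \<forall>j k :: nat.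
          (n, j) \<noteq> (m, k) \<and> n \<noteq> 0 \<and> m \<noteq> 0 \<and> \<bar>n\<bar> \<le> int N \<and> \<bar>m\<bar> \<le> int N
          \<and> j \<in> {2, 3} \<and> k \<in> {2, 3}
          \<longrightarrow> cmod (lam s M c rho n j - lam s M c rho m k) \<ge> \<upsilon>)))
     \<and>
     (c \<in> Vset s M rho \<longrightarrow>
       (\<exists>nc::nat. nc \<ge> 1
          \<and> lam s M c rho (- int nc) 2 = lam s M c rho (int nc) 3
          \<and> (\<forall>n'::nat. n' \<ge> 1 \<and> lam s M c rho (- int n') 2 = lam s M c rho (int n') 3
                \<longrightarrow> n' = nc)
          \<and> (\<forall>N::nat. N \<ge> 1 \<longrightarrow> (\<exists>\<upsilon>>0. \<forall>n m :: int. \<forall>j k :: nat.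
               (n, j) \<noteq> (m, k) \<and> n \<noteq> 0 \<and> m \<noteq> 0 \<and> \<bar>n\<bar> \<le> int N \<and> \<bar>m\<bar> \<le> int N
               \<and> j \<in> {2, 3} \<and> k \<in> {2, 3}
               \<and> {(n, j), (m, k)} \<noteq> {(- int nc, 2), (int nc, 3)}
               \<longrightarrow> cmod (lam s M c rho n j - lam s M c rho m k) \<ge> \<upsilon>))))"
proof -
  have mono: "strict_mono_on {1..} rho" using rho_simple by (rule strict_mono_on_atLeastI)
  then have inj: "inj_on rho {1..}" by (rule strict_mono_on_imp_inj_on)
  have pos: "0 < rho p" if "1 \<le> p" for p
    using rho_pos strict_mono_on_leD[OF mono, of 1 p] that by simp
  have unique: "p = q" if "1 \<le> p" "1 \<le> q"
      "critical_speed s M (rho p) = c" "critical_speed s M (rho q) = c" for p q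
  proof -
    have "rho p = rho q"
      using inj_onD[OF critical_speed_inj_on[OF _ s_lt M_nz]] s_gt pos that by simp
    then show "p = q" using inj_onD[OF inj] that by simp
  qed
  show ?thesis (is "(_ \<longrightarrow> ?A) \<and> (_ \<longrightarrow> ?B)")
  proof (intro conjI impI)
    assume "c \<notin> Vset s M rho"
    then have "critical_speed s M (rho p) \<noteq> c" if "1 \<le> p" for p
      using that unfolding Vset_eq_image by blast
    then show ?A
      using lam_separation[OF M_nz c_pos inj, where s = s and Q = "\<lambda>_ _ _ _. True"] pos by simp
  next
    assume "c \<in> Vset s M rho"
    then obtain nc where nc: "1 \<le> nc" "critical_speed s M (rho nc) = c"
      unfolding Vset_eq_image by auto
    have collide: "lam s M c rho (- int p) 2 = lam s M c rho (int p) 3 \<longleftrightarrow> p = nc" if "1 \<le> p" for p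
      using lam_collision_iff[where rho = rho, OF that pos[OF that]] unique[OF that nc(1) _ nc(2)] nc
      by blast
    have excluded: "\<not> {(n, j), (m, k)} \<noteq> {(- int nc, 2), (int nc, 3)}"
      if "1 \<le> p" "critical_speed s M (rho p) = c" "{(n, j), (m, k)} = {(- int p, 2), (int p, 3)}"
      for p :: nat and n m :: int and j k :: nat
      using that unique[OF that(1) nc(1) that(2) nc(2)] by simp
    show ?B
      using nc(1) collide pos
      by (intro exI[of _ nc] conjI allI impI lam_separation[OF M_nz c_pos inj] excluded) auto
  qed
qed

end
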